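(* Let $X$ be any $E\mathcal M$-simplicial set. Then the map $\Phi\colon E\mathrm{Inj}(2\times\omega,\omega)\times_{E\mathcal M^2}(X\times * )\to X\times *\cong X$ has image exactly $X^\mu$ and is an isomorphism $E\mathrm{Inj}(2\times\omega,\omega)\times_{E\mathcal M^2}(X\times * )\cong X^\mu$.
   Context: $\omega=\{1,2,\dots\}$, $\mathcal M$ the monoid of injections $\omega\to\omega$, $\mathcal M_A$ those fixing $A\subset\omega$ pointwise; $A$ co-infinite if $\omega\setminus A$ is infinite. $E\mathcal M$ is the simplicial monoid with $(E\mathcal M)_n=\mathcal M^{1+n}$, pointwise multiplication, structure maps by precomposition. $x\in X_n$ is $k$-supported on $A$ if $i_k(u).x=x$ for all $u\in\mathcal M_A$ ($i_k$ inclusion of the $(1+k)$-th factor). $X^\mu\subset X$ is the sub-object of simplices that are for every $k$ $k$-supported on some co-infinite set. $*$ is the terminal $E\mathcal M$-simplicial set. $E\mathrm{Inj}(2\times\omega,\omega)$ has $m$-simplices tuples $(f_0,\dots,f_m)$ of injections $2\times\omega\to\omega$ ($2=\{1,2\}$). $E\mathrm{Inj}(2\times\omega,\omega)\times_{E\mathcal M^2}(X\times Y)$ is the quotient of $E\mathrm{Inj}(2\times\omega,\omega)\times X\times Y$ by the equivalence relation generated on $m$-simplices by $(f_0,\dots,f_m;u.x,v.y)\sim(f_0(u^{(0)}\amalg v^{(0)}),\dots,f_m(u^{(m)}\amalg v^{(m)});x,y)$ for $u=(u^{(i)}),v=(v^{(i)})\in(E\mathcal M)_m$, with $E\mathcal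 M$ acting by postcomposition; $\Phi[f_0,\dots,f_m;x,y]=((f_0\iota_1,\dots,f_m\iota_1).x,(f_0\iota_2,\dots,f_m\iota_2).y)$ where $\iota_j(t)=(j,t)$. *)

theory Defs
  imports Main
begin

text \<open>omega = {1,2,...} is modelled by the type nat (relabelled 0-based).
  An n-simplex of E M, i.e. an element of M^(1+n), is a list of n+1 injections.
  The set 2 x omega is modelled by nat + nat, with iota_1 = Inl, iota_2 = Inr,
  so that u \<amalg> v becomes map_sum u v.
  A simplicial operator alpha : [m] -> [n] (monotone) is the list
  [alpha 0, ..., alpha m].\<close>

definition simp_op :: "nat \<Rightarrow> nat \<Rightarrow> nat list \<Rightarrow> bool" where
  "simp_op m n \<alpha> \<longleftrightarrow> length \<alpha> = Suc m \<and> sorted \<alpha> \<and> (\<forall>a\<in>set \<alpha>. a \<le> n)"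

definition op_id :: "nat \<Rightarrow> nat list" where
  "op_id n = [0..<Suc n]"

definition op_comp :: "nat list \<Rightarrow> nat list \<Rightarrow> nat list" where
  "op_comp \<alpha> \<beta> = map (\<lambda>j. \<alpha> ! j) \<beta>"

definition inj_tuple :: "nat \<Rightarrow> ('c \<Rightarrow> nat) list \<Rightarrow> bool" where
  "inj_tuple n u \<longleftrightarrow> length u = Suc n \<and> (\<forall>g\<in>set u. inj g)"

abbreviation EM_simplex :: "nat \<Rightarrow> (nat \<Rightarrow> nat) list \<Rightarrow> bool" where
  "EM_simplex n u \<equiv> inj_tuple n u"

abbreviation EInj_simplex :: "nat \<Rightarrow> (nat + nat \<Rightarrow> nat) list \<Rightarrow> bool" where
  "EInj_simplex n f \<equiv> inj_tuple n f"

definition tuple_mult :: "('b \<Rightarrow> 'c) list \<Rightarrow> ('a \<Rightarrow> 'b) list \<Rightarrow> ('a \<Rightarrow> 'c) list" where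
  "tuple_mult u v = map2 (\<circ>) u v"

definition tuple_unit :: "nat \<Rightarrow> (nat \<Rightarrow> nat) list" where
  "tuple_unit n = replicate (Suc n) id"

definition tuple_restr :: "'c list \<Rightarrow> nat list \<Rightarrow> 'c list" where
  "tuple_restr u \<alpha> = map (\<lambda>j. u ! j) \<alpha>"

text \<open>X n is the set of n-simplices; sim m n \<alpha> : X n -> X m is the simplicial
  operator induced by \<alpha> : [m] -> [n]; act n u : X n -> X n is the action of
  u in (E M)_n.\<close>

definition EM_sset ::
  "(nat \<Rightarrow> 'a set) \<Rightarrow> (nat \<Rightarrow> nat \<Rightarrow> nat list \<Rightarrow> 'a \<Rightarrow> 'a)
     \<Rightarrow> (nat \<Rightarrow> (nat \<Rightarrow> nat) list \<Rightarrow> 'a \<Rightarrow> 'a) \<Rightarrow> bool" where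
  "EM_sset X sim act \<longleftrightarrow>
     (\<forall>m n \<alpha> x. simp_op m n \<alpha> \<longrightarrow> x \<in> X n \<longrightarrow> sim m n \<alpha> x \<in> X m)
   \<and> (\<forall>n x. x \<in> X n \<longrightarrow> sim n n (op_id n) x = x)
   \<and> (\<forall>k m n \<alpha> \<beta> x. simp_op m n \<alpha> \<longrightarrow> simp_op k m \<beta> \<longrightarrow> x \<in> X n \<longrightarrow>
        sim k m \<beta> (sim m n \<alpha> x) = sim k n (op_comp \<alpha> \<beta>) x)
   \<and> (\<forall>n u x. EM_simplex n u \<longrightarrow> x \<in> X n \<longrightarrow> act n u x \<in> X n)
   \<and> (\<forall>n x. x \<in> X n \<longrightarrow> act n (tuple_unit n) x = x)
   \<and> (\<forall>n u v x. EM_simplex n u \<longrightarrow> EM_simplex n v \<longrightarrow> x \<in> X n \<longrightarrow>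
        act n u (act n v x) = act n (tuple_mult u v) x)
   \<and> (\<forall>m n \<alpha> u x. simp_op m n \<alpha> \<longrightarrow> EM_simplex n u \<longrightarrow> x \<in> X n \<longrightarrow>
        sim m n \<alpha> (act n u x) = act m (tuple_restr u \<alpha>) (sim m n \<alpha> x))"

definition term_X :: "nat \<Rightarrow> unit set" where "term_X n = {()}"
definition term_sim :: "nat \<Rightarrow> nat \<Rightarrow> nat list \<Rightarrow> unit \<Rightarrow> unit" where "term_sim m n \<alpha> y = ()"
definition term_act :: "nat \<Rightarrow> (nat \<Rightarrow> nat) list \<Rightarrow> unit \<Rightarrow> unit" where "term_act n u y = ()"

definition incl_k :: "nat \<Rightarrow> nat \<Rightarrow> (nat \<Rightarrow> nat) \<Rightarrow> (nat \<Rightarrow> nat) list" where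
  "incl_k n k u = (tuple_unit n)[k := u]"

definition M_fix :: "nat set \<Rightarrow> (nat \<Rightarrow> nat) set" where
  "M_fix A = {u. inj u \<and> (\<forall>a\<in>A. u a = a)}"

definition k_supported ::
  "(nat \<Rightarrow> (nat \<Rightarrow> nat) list \<Rightarrow> 'a \<Rightarrow> 'a) \<Rightarrow> nat \<Rightarrow> nat \<Rightarrow> nat set \<Rightarrow> 'a \<Rightarrow> bool" where
  "k_supported act n k A x \<longleftrightarrow> (\<forall>u\<in>M_fix A. act n (incl_k n k u) x = x)"

definition coinfinite :: "nat set \<Rightarrow> bool" where
  "coinfinite A \<longleftrightarrow> infinite (UNIV - A)"

definition X_mu ::
  "(nat \<Rightarrow> 'a set) \<Rightarrow> (nat \<Rightarrow> (nat \<Rightarrow> nat) list \<Rightarrow> 'a \<Rightarrow> 'a) \<Rightarrow> nat \<Rightarrow> 'a set" where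
  "X_mu X act n = {x \<in> X n. \<forall>k\<le>n. \<exists>A. coinfinite A \<and> k_supported act n k A x}"

text \<open>m-simplices of E Inj(2 x omega, omega) x X x Y (representatives)\<close>
definition bal_reps :: "(nat \<Rightarrow> 'a set) \<Rightarrow> (nat \<Rightarrow> 'b set) \<Rightarrow> nat
     \<Rightarrow> ((nat + nat \<Rightarrow> nat) list \<times> 'a \<times> 'b) set" where
  "bal_reps X Y m = {(f, x, y). EInj_simplex m f \<and> x \<in> X m \<and> y \<in> Y m}"

definition bal_gen ::
  "(nat \<Rightarrow> 'a set) \<Rightarrow> (nat \<Rightarrow> (nat \<Rightarrow> nat) list \<Rightarrow> 'a \<Rightarrow> 'a)
   \<Rightarrow> (nat \<Rightarrow> 'b set) \<Rightarrow> (nat \<Rightarrow> (nat \<Rightarrow> nat) list \<Rightarrow> 'b \<Rightarrow> 'b) \<Rightarrow> nat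
   \<Rightarrow> ((nat + nat \<Rightarrow> nat) list \<times> 'a \<times> 'b) \<Rightarrow> ((nat + nat \<Rightarrow> nat) list \<times> 'a \<times> 'b) \<Rightarrow> bool" where
  "bal_gen X actX Y actY m p q \<longleftrightarrow>
     (\<exists>f u v x y. EInj_simplex m f \<and> EM_simplex m u \<and> EM_simplex m v \<and> x \<in> X m \<and> y \<in> Y m
        \<and> p = (f, actX m u x, actY m v y)
        \<and> q = (map2 (\<lambda>g (a, b). g \<circ> map_sum a b) f (zip u v), x, y))"

definition bal_rel ::
  "(nat \<Rightarrow> 'a set) \<Rightarrow> (nat \<Rightarrow> (nat \<Rightarrow> nat) list \<Rightarrow> 'a \<Rightarrow> 'a)
   \<Rightarrow> (nat \<Rightarrow> 'b set) \<Rightarrow> (nat \<Rightarrow> (nat \<Rightarrow> nat) list \<Rightarrow> 'b \<Rightarrow> 'b) \<Rightarrow> nat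
   \<Rightarrow> ((nat + nat \<Rightarrow> nat) list \<times> 'a \<times> 'b) \<Rightarrow> ((nat + nat \<Rightarrow> nat) list \<times> 'a \<times> 'b) \<Rightarrow> bool" where
  "bal_rel X actX Y actY m = equivclp (bal_gen X actX Y actY m)"

definition Phi ::
  "(nat \<Rightarrow> (nat \<Rightarrow> nat) list \<Rightarrow> 'a \<Rightarrow> 'a) \<Rightarrow> (nat \<Rightarrow> (nat \<Rightarrow> nat) list \<Rightarrow> 'b \<Rightarrow> 'b) \<Rightarrow> nat
   \<Rightarrow> ((nat + nat \<Rightarrow> nat) list \<times> 'a \<times> 'b) \<Rightarrow> 'a \<times> 'b" where
  "Phi actX actY m p = (case p of (f, x, y) \<Rightarrow>
      (actX m (map (\<lambda>g. g \<circ> Inl) f) x, actY m (map (\<lambda>g. g \<circ> Inr) f) y))"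

end

(*
  Because * is terminal, Phi [f; x] is just (f_i o iota_1).x, so everything depends on the
  left halves a_i = f_i o iota_1 of the levelwise injections f_i : 2 x omega -> omega.

  Image: a.x is k-supported on the image of a_k, which is co-infinite because it misses the
  image of f_k o iota_2. Conversely, if y has co-infinite k-supports A_k, pick injections
  G_k : 2 x omega -> omega with G_k o iota_1 fixing A_k (send the second summand into the
  infinite complement); then y is fixed by the left halves of G, so y = Phi [G; y].

  Injectivity: representatives with equal left halves are identified, since levelwise
  F = H (1 \<amalg> v) and F' = H (1 \<amalg> v'). Hence [f; x] = [G; a.x] whenever the left halves of G
  fix the image of a. Given a.x = a'.x' = y, choose such G for a and G' for a' whose left
  halves c, c' have disjoint supports, so that they commute and both fix y. Then
  [G; y] = [G (c' \<amalg> 1); y] and [G'; y] = [G' (c \<amalg> 1); y], and these two representatives have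
  the same left halves c c' = c' c.
*)

theory Submission
  imports Defs "HOL-Library.Infinite_Set"
begin

section \<open>Injections of omega and of 2 x omega\<close>

lemma infinite_split:
  fixes S :: "nat set"
  assumes "infinite S"
  obtains T where "T \<subseteq> S" "infinite T" "infinite (S - T)"
proof
  let ?e = "enumerate S"
  have inj_e: "inj ?e" using inj_enumerate[OF assms] .
  show "range (\<lambda>n. ?e (2 * n)) \<subseteq> S" using enumerate_in_set[OF assms] by auto
  show "infinite (range (\<lambda>n. ?e (2 * n)))"
    by (rule range_inj_infinite) (auto simp: inj_def dest: injD[OF inj_e])
  have "range (\<lambda>n. ?e (2 * n + 1)) \<subseteq> S - range (\<lambda>n. ?e (2 * n))"
    using enumerate_in_set[OF assms] by (auto dest!: injD[OF inj_e]) presburger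
  moreover have "infinite (range (\<lambda>n. ?e (2 * n + 1)))"
    by (rule range_inj_infinite) (auto simp: inj_def dest: injD[OF inj_e])
  ultimately show "infinite (S - range (\<lambda>n. ?e (2 * n)))" using finite_subset by blast
qed

lemma infinite_disjoint_subsets:
  fixes K K' :: "nat set"
  assumes "infinite K" "infinite K'"
  obtains M M' where "M \<subseteq> K" "M' \<subseteq> K'" "M \<inter> M' = {}" "infinite M" "infinite M'"
proof (cases "finite (K - K')")
  case False
  then show ?thesis using that[of "K - K'" K'] assms(2) by auto
next
  case True
  then have "infinite (K \<inter> K')" using assms(1) by (metis Int_Diff_Un finite_Un)
  then obtain T where "T \<subseteq> K \<inter> K'" "infinite T" "infinite (K \<inter> K' - T)" by (rule infinite_split)
  then show ?thesis using that[of T "K \<inter> K' - T"] by auto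
qed

lemma inj_sum_extending_id_outside:
  fixes M :: "nat set"
  assumes "infinite M"
  obtains G :: "nat + nat \<Rightarrow> nat"
  where "inj G" "\<forall>n\<in>- M. G (Inl n) = n" "(G \<circ> Inl) ` M \<subseteq> M"
proof
  let ?e = "enumerate M"
  let ?i = "inv_into UNIV ?e"
  have bij: "bij_betw ?e UNIV M" by (rule bij_enumerate[OF assms])
  then have inj_e: "inj ?e" and inj_i: "inj_on ?i M" and e_M: "\<And>n. ?e n \<in> M"
    by (auto simp: bij_betw_def inj_on_inv_into)
  \<comment> \<open>Through the enumeration of M, M itself goes to the even and the second summand
    to the odd positions.\<close>
  define G where "G = case_sum (\<lambda>n. if n \<in> M then ?e (2 * ?i n) else n) (\<lambda>n. ?e (2 * n + 1))"
  show "\<forall>n\<in>- M. G (Inl n) = n" by (simp add: G_def)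
  show "(G \<circ> Inl) ` M \<subseteq> M" using e_M by (auto simp: G_def)
  show "inj G"
  proof (rule injI)
    fix p q assume "G p = G q"
    then show "p = q"
      using e_M inj_on_eq_iff[OF inj_i]
      by (cases p; cases q) (auto simp: G_def inj_eq[OF inj_e] split: if_splits, presburger+)
  qed
qed

lemma comp_commute_of_disjoint_supports:
  fixes c c' :: "'a \<Rightarrow> 'a"
  assumes "\<forall>n\<in>- M. c n = n" "c ` M \<subseteq> M" "\<forall>n\<in>- M'. c' n = n" "c' ` M' \<subseteq> M'"
    and "M \<inter> M' = {}"
  shows "c \<circ> c' = c' \<circ> c"
proof
  fix n
  consider "n \<in> M" | "n \<in> M'" | "n \<notin> M" "n \<notin> M'" by blast
  then show "(c \<circ> c') n = (c' \<circ> c) n"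
  proof cases
    case 1
    then have "c n \<notin> M'" "n \<notin> M'" using assms(2,5) by auto
    then show ?thesis using assms(3) by simp
  next
    case 2
    then have "c' n \<notin> M" "n \<notin> M" using assms(4,5) by auto
    then show ?thesis using assms(1) by simp
  next
    case 3
    then show ?thesis using assms(1,3) by simp
  qed
qed

lemma commuting_inj_sums_fixing:
  fixes A A' :: "nat set"
  assumes "coinfinite A" "coinfinite A'"
  obtains G G' :: "nat + nat \<Rightarrow> nat"
  where "inj G" "inj G'" "\<forall>a\<in>A. G (Inl a) = a" "\<forall>a\<in>A'. G' (Inl a) = a"
    "(G \<circ> Inl) \<circ> (G' \<circ> Inl) = (G' \<circ> Inl) \<circ> (G \<circ> Inl)"
proof -
  have "infinite (- A)" "infinite (- A')"
    using assms by (simp_all add: coinfinite_def Compl_eq_Diff_UNIV)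
  then obtain M M' where M: "M \<subseteq> - A" "M' \<subseteq> - A'" "M \<inter> M' = {}" "infinite M" "infinite M'"
    by (rule infinite_disjoint_subsets)
  obtain G :: "nat + nat \<Rightarrow> nat" where G: "inj G" "\<forall>n\<in>- M. G (Inl n) = n" "(G \<circ> Inl) ` M \<subseteq> M"
    by (rule inj_sum_extending_id_outside[OF \<open>infinite M\<close>])
  obtain G' :: "nat + nat \<Rightarrow> nat" where G': "inj G'" "\<forall>n\<in>- M'. G' (Inl n) = n" "(G' \<circ> Inl) ` M' \<subseteq> M'"
    by (rule inj_sum_extending_id_outside[OF \<open>infinite M'\<close>])
  show thesis
  proof (rule that[OF G(1) G'(1)])
    show "\<forall>a\<in>A. G (Inl a) = a" using G(2) M(1) by blast
    show "\<forall>a\<in>A'. G' (Inl a) = a" using G'(2) M(2) by blast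
    show "(G \<circ> Inl) \<circ> (G' \<circ> Inl) = (G' \<circ> Inl) \<circ> (G \<circ> Inl)"
      by (rule comp_commute_of_disjoint_supports[OF _ G(3) _ G'(3) M(3)]) (use G G' in auto)
  qed
qed

lemma coinfinite_range_Inl:
  fixes F :: "nat + nat \<Rightarrow> nat"
  assumes "inj F"
  shows "coinfinite (range (F \<circ> Inl))"
proof -
  have "range (F \<circ> Inr) \<subseteq> UNIV - range (F \<circ> Inl)" using assms by (auto simp: inj_eq)
  moreover have "infinite (range (F \<circ> Inr))"
    by (rule range_inj_infinite) (use assms in \<open>simp add: inj_compose\<close>)
  ultimately show ?thesis unfolding coinfinite_def using finite_subset by blast
qed

lemma inj_case_sum:
  assumes "inj f" "inj g" "range f \<inter> range g = {}"
  shows "inj (case_sum f g)"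
proof (rule injI)
  fix p q assume "case_sum f g p = case_sum f g q"
  then show "p = q"
    using assms by (cases p; cases q) (auto simp: inj_eq)
qed

lemma inj_sums_common_left_factor:
  fixes F F' :: "nat + nat \<Rightarrow> nat"
  assumes inj: "inj F" "inj F'" and same_left: "F \<circ> Inl = F' \<circ> Inl"
  obtains H :: "nat + nat \<Rightarrow> nat" and v v' :: "nat \<Rightarrow> nat"
  where "inj H" "inj v" "inj v'" "F = H \<circ> map_sum id v" "F' = H \<circ> map_sum id v'"
proof
  define B where "B = range (F \<circ> Inr) \<union> range (F' \<circ> Inr)"
  define e where "e = enumerate B"
  have inj_right: "inj (F \<circ> Inr)" "inj (F' \<circ> Inr)" using inj by (simp_all add: inj_compose)
  then have "infinite B" unfolding B_def using range_inj_infinite by blast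
  then have bij: "bij_betw e UNIV B" unfolding e_def by (rule bij_enumerate)
  then have inj_e: "inj e" and inj_inv: "inj_on (inv e) B" and range_e: "range e = B"
    by (auto simp: bij_betw_def inj_on_inv_into)
  have right_in_B: "F (Inr b) \<in> B" "F' (Inr b) \<in> B" for b by (auto simp: B_def)
  have e_inv: "e (inv e y) = y" if "y \<in> B" for y using that range_e by (simp add: f_inv_into_f)
  have "F (Inl a) \<notin> B" for a
  proof
    assume "F (Inl a) \<in> B"
    then obtain b where "F (Inl a) = F (Inr b) \<or> F' (Inl a) = F' (Inr b)"
      using same_left by (auto simp: B_def fun_eq_iff)
    then show False using inj by (auto dest: injD)
  qed
  then have "range (F \<circ> Inl) \<inter> range e = {}" unfolding range_e by auto
  then show "inj (case_sum (F \<circ> Inl) e)"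
    using inj(1) inj_e by (intro inj_case_sum) (simp_all add: inj_compose)
  show "inj (inv e \<circ> (F \<circ> Inr))" "inj (inv e \<circ> (F' \<circ> Inr))"
    by (rule comp_inj_on[OF inj_right(1)] comp_inj_on[OF inj_right(2)],
        rule inj_on_subset[OF inj_inv], auto simp: B_def)+
  show "F = case_sum (F \<circ> Inl) e \<circ> map_sum id (inv e \<circ> (F \<circ> Inr))"
  proof
    fix s show "F s = (case_sum (F \<circ> Inl) e \<circ> map_sum id (inv e \<circ> (F \<circ> Inr))) s"
      by (cases s) (simp_all add: e_inv right_in_B)
  qed
  show "F' = case_sum (F \<circ> Inl) e \<circ> map_sum id (inv e \<circ> (F' \<circ> Inr))"
  proof
    fix s show "F' s = (case_sum (F \<circ> Inl) e \<circ> map_sum id (inv e \<circ> (F' \<circ> Inr))) s"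
      using same_left by (cases s) (simp_all add: e_inv right_in_B fun_eq_iff)
  qed
qed

section \<open>Tuples of injections\<close>

lemma ex_list_of_levelwise:
  assumes "\<forall>i<n. \<exists>x. P i x"
  obtains xs where "length xs = n" "\<forall>i<n. P i (xs ! i)"
proof
  show "length (map (\<lambda>i. SOME x. P i x) [0..<n]) = n" by simp
  show "\<forall>i<n. P i (map (\<lambda>i. SOME x. P i x) [0..<n] ! i)"
  proof (intro allI impI)
    fix i assume "i < n"
    then show "P i (map (\<lambda>i. SOME x. P i x) [0..<n] ! i)"
      using someI_ex[of "P i"] assms by simp
  qed
qed

abbreviation left_parts :: "('a + 'b \<Rightarrow> 'c) list \<Rightarrow> ('a \<Rightarrow> 'c) list" where
  "left_parts f \<equiv> map (\<lambda>g. g \<circ> Inl) f"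

definition tuple_comp_sum ::
  "('a + 'b \<Rightarrow> 'c) list \<Rightarrow> ('d \<Rightarrow> 'a) list \<Rightarrow> ('e \<Rightarrow> 'b) list \<Rightarrow> ('d + 'e \<Rightarrow> 'c) list" where
  "tuple_comp_sum f u v = map2 (\<lambda>g (a, b). g \<circ> map_sum a b) f (zip u v)"

lemma length_tuple_comp_sum [simp]:
  "length (tuple_comp_sum f u v) = min (length f) (min (length u) (length v))"
  by (simp add: tuple_comp_sum_def)

lemma nth_tuple_comp_sum [simp]:
  "i < length f \<Longrightarrow> i < length u \<Longrightarrow> i < length v \<Longrightarrow>
    tuple_comp_sum f u v ! i = f ! i \<circ> map_sum (u ! i) (v ! i)"
  by (simp add: tuple_comp_sum_def)

lemma length_tuple_mult [simp]: "length (tuple_mult u v) = min (length u) (length v)"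
  by (simp add: tuple_mult_def)

lemma nth_tuple_mult [simp]:
  "i < length u \<Longrightarrow> i < length v \<Longrightarrow> tuple_mult u v ! i = u ! i \<circ> v ! i"
  by (simp add: tuple_mult_def)

lemma length_tuple_unit [simp]: "length (tuple_unit n) = Suc n"
  by (simp add: tuple_unit_def)

lemma nth_tuple_unit [simp]: "i < Suc n \<Longrightarrow> tuple_unit n ! i = id"
  unfolding tuple_unit_def by (rule nth_replicate)

lemma inj_tuple_iff_nth: "inj_tuple n u \<longleftrightarrow> length u = Suc n \<and> (\<forall>i<Suc n. inj (u ! i))"
  by (auto simp: inj_tuple_def all_set_conv_all_nth)

lemma inj_tuple_unit: "inj_tuple n (tuple_unit n)"
  by (simp add: inj_tuple_iff_nth)

lemma inj_tuple_left_parts: "inj_tuple n f \<Longrightarrow> inj_tuple n (left_parts f)"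
  by (auto simp: inj_tuple_def intro: inj_compose)

lemma inj_tuple_comp_sum:
  "inj_tuple n f \<Longrightarrow> inj_tuple n u \<Longrightarrow> inj_tuple n v \<Longrightarrow> inj_tuple n (tuple_comp_sum f u v)"
  by (simp add: inj_tuple_iff_nth sum.inj_map inj_compose)

lemma inj_tuple_incl_k: "k \<le> n \<Longrightarrow> inj u \<Longrightarrow> inj_tuple n (incl_k n k u)"
  by (simp add: inj_tuple_iff_nth incl_k_def nth_list_update)

lemma left_parts_tuple_comp_sum:
  "length u = length f \<Longrightarrow> length v = length f \<Longrightarrow>
    left_parts (tuple_comp_sum f u v) = tuple_mult (left_parts f) u"
  by (simp add: list_eq_iff_nth_eq fun_eq_iff)

lemma left_parts_tuple_mult: "left_parts (tuple_mult w f) = tuple_mult w (left_parts f)"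
  by (simp add: list_eq_iff_nth_eq comp_assoc)

lemma left_parts_tuple_restr:
  "\<forall>j\<in>set \<alpha>. j < length f \<Longrightarrow> left_parts (tuple_restr f \<alpha>) = tuple_restr (left_parts f) \<alpha>"
  by (simp add: tuple_restr_def)

lemma tuple_mult_incl_k:
  "k \<le> n \<Longrightarrow> length w = Suc n \<Longrightarrow> tuple_mult (incl_k n k u) w = w[k := u \<circ> w ! k]"
  by (simp add: list_eq_iff_nth_eq incl_k_def nth_list_update)

lemma commuting_stabilizers_of_left_parts:
  fixes f f' :: "(nat + nat \<Rightarrow> nat) list"
  assumes "inj_tuple m f" "inj_tuple m f'"
  obtains G G' :: "(nat + nat \<Rightarrow> nat) list"
  where "inj_tuple m G" "inj_tuple m G'"
    "tuple_mult (left_parts G) (left_parts f) = left_parts f"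
    "tuple_mult (left_parts G') (left_parts f') = left_parts f'"
    "tuple_mult (left_parts G) (left_parts G') = tuple_mult (left_parts G') (left_parts G)"
proof -
  define good where "good i GG' \<longleftrightarrow> inj (fst GG') \<and> inj (snd GG')
      \<and> (fst GG' \<circ> Inl) \<circ> (f ! i \<circ> Inl) = f ! i \<circ> Inl
      \<and> (snd GG' \<circ> Inl) \<circ> (f' ! i \<circ> Inl) = f' ! i \<circ> Inl
      \<and> (fst GG' \<circ> Inl) \<circ> (snd GG' \<circ> Inl) = (snd GG' \<circ> Inl) \<circ> (fst GG' \<circ> Inl)"
    for i and GG' :: "(nat + nat \<Rightarrow> nat) \<times> (nat + nat \<Rightarrow> nat)"
  have "\<forall>i<Suc m. \<exists>GG'. good i GG'"
  proof (intro allI impI)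
    fix i assume "i < Suc m"
    then have "inj (f ! i)" "inj (f' ! i)" using assms by (auto simp: inj_tuple_iff_nth)
    then obtain G G' :: "nat + nat \<Rightarrow> nat" where
      "inj G" "inj G'" "\<forall>a\<in>range (f ! i \<circ> Inl). G (Inl a) = a"
      "\<forall>a\<in>range (f' ! i \<circ> Inl). G' (Inl a) = a"
      "(G \<circ> Inl) \<circ> (G' \<circ> Inl) = (G' \<circ> Inl) \<circ> (G \<circ> Inl)"
      by (rule commuting_inj_sums_fixing[OF coinfinite_range_Inl coinfinite_range_Inl])
    then have "good i (G, G')" by (simp add: good_def fun_eq_iff)
    then show "\<exists>GG'. good i GG'" ..
  qed
  then obtain GGs where GGs: "length GGs = Suc m" "\<forall>i<Suc m. good i (GGs ! i)"
    by (rule ex_list_of_levelwise)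
  show thesis
  proof (rule that[of "map fst GGs" "map snd GGs"])
    show "inj_tuple m (map fst GGs)" "inj_tuple m (map snd GGs)"
      using GGs by (simp_all add: good_def inj_tuple_iff_nth)
    show "tuple_mult (left_parts (map fst GGs)) (left_parts f) = left_parts f"
      "tuple_mult (left_parts (map snd GGs)) (left_parts f') = left_parts f'"
      "tuple_mult (left_parts (map fst GGs)) (left_parts (map snd GGs))
        = tuple_mult (left_parts (map snd GGs)) (left_parts (map fst GGs))"
      using GGs assms by (simp_all add: good_def inj_tuple_def list_eq_iff_nth_eq)
  qed
qed

section \<open>The balanced product with the terminal object\<close>

lemma Phi_terminal [simp]: "Phi act term_act m (f, x, y) = (act m (left_parts f) x, ())"
  by (simp add: Phi_def term_act_def)

lemma bal_rel_sym: "bal_rel X a Y b m p q \<Longrightarrow> bal_rel X a Y b m q p"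
  unfolding bal_rel_def by (rule equivclp_sym)

lemma bal_rel_trans [trans]:
  "bal_rel X a Y b m p q \<Longrightarrow> bal_rel X a Y b m q r \<Longrightarrow> bal_rel X a Y b m p r"
  unfolding bal_rel_def by (rule equivclp_trans)

lemma bal_rel_generator:
  assumes "inj_tuple m f" "inj_tuple m u" "inj_tuple m v" "x \<in> X m" "y \<in> Y m"
  shows "bal_rel X actX Y actY m (f, actX m u x, actY m v y) (tuple_comp_sum f u v, x, y)"
  unfolding bal_rel_def
  by (rule r_into_equivclp) (use assms in \<open>auto simp: bal_gen_def tuple_comp_sum_def\<close>)

locale EM_simplicial_set =
  fixes X :: "nat \<Rightarrow> 'a set" and sim :: "nat \<Rightarrow> nat \<Rightarrow> nat list \<Rightarrow> 'a \<Rightarrow> 'a"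
    and act :: "nat \<Rightarrow> (nat \<Rightarrow> nat) list \<Rightarrow> 'a \<Rightarrow> 'a"
  assumes EM_sset: "EM_sset X sim act"
begin

lemma act_closed: "EM_simplex n u \<Longrightarrow> x \<in> X n \<Longrightarrow> act n u x \<in> X n"
  using EM_sset unfolding EM_sset_def by blast

lemma act_unit: "x \<in> X n \<Longrightarrow> act n (tuple_unit n) x = x"
  using EM_sset unfolding EM_sset_def by blast

lemma act_mult:
  "EM_simplex n u \<Longrightarrow> EM_simplex n v \<Longrightarrow> x \<in> X n \<Longrightarrow> act n u (act n v x) = act n (tuple_mult u v) x"
  using EM_sset unfolding EM_sset_def by blast

lemma sim_act:
  "simp_op m n \<alpha> \<Longrightarrow> EM_simplex n u \<Longrightarrow> x \<in> X n \<Longrightarrow>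
    sim m n \<alpha> (act n u x) = act m (tuple_restr u \<alpha>) (sim m n \<alpha> x)"
  using EM_sset unfolding EM_sset_def by blast

lemma act_supported_on_range:
  assumes a: "EM_simplex m a" and x: "x \<in> X m" and k: "k \<le> m"
  shows "k_supported act m k (range (a ! k)) (act m a x)"
  unfolding k_supported_def
proof
  fix u assume "u \<in> M_fix (range (a ! k))"
  then have u: "inj u" "u \<circ> a ! k = a ! k" by (auto simp: M_fix_def fun_eq_iff)
  have "tuple_mult (incl_k m k u) a = a"
    using a k u(2) by (simp add: tuple_mult_incl_k inj_tuple_def)
  then show "act m (incl_k m k u) (act m a x) = act m a x"
    using act_mult[OF inj_tuple_incl_k[OF k u(1)] a x] by simp
qed

lemma act_left_parts_in_X_mu:
  fixes f :: "(nat + nat \<Rightarrow> nat) list"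
  assumes f: "inj_tuple m f" and x: "x \<in> X m"
  shows "act m (left_parts f) x \<in> X_mu X act m"
proof -
  have "coinfinite (range (left_parts f ! k))" if "k \<le> m" for k
    using f that coinfinite_range_Inl[of "f ! k"] by (simp add: inj_tuple_iff_nth)
  then have "\<forall>k\<le>m. \<exists>A. coinfinite A \<and> k_supported act m k A (act m (left_parts f) x)"
    using act_supported_on_range[OF inj_tuple_left_parts[OF f] x] by blast
  then show ?thesis using act_closed[OF inj_tuple_left_parts[OF f] x] by (simp add: X_mu_def)
qed

lemma act_eq_if_levelwise_fixed:
  assumes y: "y \<in> X m" and cs: "inj_tuple m cs"
    and fixed: "\<And>k. k \<le> m \<Longrightarrow> act m (incl_k m k (cs ! k)) y = y"
  shows "act m cs y = y"
proof -
  \<comment> \<open>cs is the product of the incl_k m k (cs ! k); induct on the number of non-trivial entries.\<close>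
  have "act m cs' y = y"
    if "j \<le> Suc m" "inj_tuple m cs'" "\<And>k. k < j \<Longrightarrow> act m (incl_k m k (cs' ! k)) y = y"
      "\<And>k. j \<le> k \<Longrightarrow> k \<le> m \<Longrightarrow> cs' ! k = id" for j cs'
    using that
  proof (induction j arbitrary: cs')
    case 0
    then have "cs' = tuple_unit m" by (simp add: inj_tuple_iff_nth list_eq_iff_nth_eq id_def)
    then show ?case using act_unit[OF y] by simp
  next
    case (Suc j)
    let ?rest = "cs'[j := id]" and ?head = "incl_k m j (cs' ! j)"
    have j: "j \<le> m" "length cs' = Suc m" using Suc.prems(1,2) by (auto simp: inj_tuple_def)
    have rest: "inj_tuple m ?rest" using Suc.prems(2) j by (auto simp: inj_tuple_iff_nth nth_list_update)
    have head: "inj_tuple m ?head"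
      using Suc.prems(2) j by (intro inj_tuple_incl_k) (auto simp: inj_tuple_iff_nth)
    have split: "tuple_mult ?head ?rest = cs'" using j by (simp add: tuple_mult_incl_k)
    have "act m cs' y = act m ?head (act m ?rest y)"
      using act_mult[OF head rest y] split by simp
    also have "act m ?rest y = y"
    proof (rule Suc.IH)
      show "j \<le> Suc m" "inj_tuple m ?rest" using j rest by simp_all
      show "act m (incl_k m k (?rest ! k)) y = y" if "k < j" for k
        using Suc.prems(3)[of k] that j by simp
      show "?rest ! k = id" if "j \<le> k" "k \<le> m" for k
        using Suc.prems(4)[of k] that j by (cases "k = j") (simp_all add: id_def)
    qed
    also have "act m ?head y = y" using Suc.prems(3) by simp
    finally show ?case .
  qed
  from this[of "Suc m" cs] show ?thesis using cs fixed by simp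
qed

lemma X_mu_stabilized_by_left_parts:
  assumes "y \<in> X_mu X act m"
  obtains G :: "(nat + nat \<Rightarrow> nat) list" where "inj_tuple m G" "act m (left_parts G) y = y"
proof -
  have y: "y \<in> X m" using assms by (simp add: X_mu_def)
  have "\<forall>k<Suc m. \<exists>g :: nat + nat \<Rightarrow> nat. inj g \<and> act m (incl_k m k (g \<circ> Inl)) y = y"
  proof (intro allI impI)
    fix k assume "k < Suc m"
    then have "\<exists>A. coinfinite A \<and> k_supported act m k A y"
      using assms by (simp add: X_mu_def)
    then obtain A where A: "coinfinite A" "k_supported act m k A y" by blast
    then have "infinite (- A)" by (simp add: coinfinite_def Compl_eq_Diff_UNIV)
    then obtain g :: "nat + nat \<Rightarrow> nat" where g: "inj g" "\<forall>n\<in>- (- A). g (Inl n) = n"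
      by (rule inj_sum_extending_id_outside)
    then have "g \<circ> Inl \<in> M_fix A" by (simp add: M_fix_def inj_compose)
    then have "act m (incl_k m k (g \<circ> Inl)) y = y" using A(2) by (simp add: k_supported_def)
    then show "\<exists>g :: nat + nat \<Rightarrow> nat. inj g \<and> act m (incl_k m k (g \<circ> Inl)) y = y"
      using g(1) by blast
  qed
  then obtain G :: "(nat + nat \<Rightarrow> nat) list" where
    G: "length G = Suc m" "\<forall>k<Suc m. inj (G ! k) \<and> act m (incl_k m k (G ! k \<circ> Inl)) y = y"
    by (rule ex_list_of_levelwise)
  then have "inj_tuple m G" by (simp add: inj_tuple_iff_nth)
  moreover have "act m (left_parts G) y = y"
  proof (rule act_eq_if_levelwise_fixed[OF y inj_tuple_left_parts[OF \<open>inj_tuple m G\<close>]])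
    show "act m (incl_k m k (left_parts G ! k)) y = y" if "k \<le> m" for k
      using G that by simp
  qed
  ultimately show thesis by (rule that)
qed

abbreviation bal_eq :: "nat \<Rightarrow> (nat + nat \<Rightarrow> nat) list \<times> 'a \<times> unit \<Rightarrow> (nat + nat \<Rightarrow> nat) list \<times> 'a \<times> unit \<Rightarrow> bool"
  where "bal_eq m \<equiv> bal_rel X act term_X term_act m"

lemma bal_eq_generator:
  "inj_tuple m f \<Longrightarrow> inj_tuple m u \<Longrightarrow> inj_tuple m v \<Longrightarrow> x \<in> X m \<Longrightarrow>
    bal_eq m (f, act m u x, ()) (tuple_comp_sum f u v, x, ())"
  using bal_rel_generator[of m f u v x X "()" term_X act term_act] by (simp add: term_X_def term_act_def)

lemma Phi_eq_if_bal_gen: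
  assumes "bal_gen X act term_X term_act m p q"
  shows "Phi act term_act m p = Phi act term_act m q"
proof -
  from assms obtain f u v x where fuvx: "inj_tuple m f" "inj_tuple m u" "inj_tuple m v" "x \<in> X m"
    "p = (f, act m u x, ())" "q = (tuple_comp_sum f u v, x, ())"
    by (auto simp: bal_gen_def tuple_comp_sum_def term_X_def)
  then have "length u = length f" "length v = length f" by (auto simp: inj_tuple_def)
  with fuvx show ?thesis
    by (simp add: act_mult inj_tuple_left_parts left_parts_tuple_comp_sum)
qed

lemma Phi_eq_if_bal_eq:
  assumes "bal_eq m p q"
  shows "Phi act term_act m p = Phi act term_act m q"
  using assms unfolding bal_rel_def
proof (induction rule: equivclp_induct)
  case (step q r)
  then show ?case using Phi_eq_if_bal_gen[of m q r] Phi_eq_if_bal_gen[of m r q] by argo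
qed (rule refl)

lemma bal_eq_right_factor:
  assumes H: "inj_tuple m H" and F: "inj_tuple m F" and z: "z \<in> X m"
    and factor: "\<forall>i<Suc m. \<exists>v. inj v \<and> F ! i = H ! i \<circ> map_sum id v"
  shows "bal_eq m (H, z, ()) (F, z, ())"
proof -
  obtain V where V: "length V = Suc m" "\<forall>i<Suc m. inj (V ! i) \<and> F ! i = H ! i \<circ> map_sum id (V ! i)"
    using factor by (rule ex_list_of_levelwise)
  then have "inj_tuple m V" by (simp add: inj_tuple_iff_nth)
  moreover have "F = tuple_comp_sum H (tuple_unit m) V"
    using V H F by (simp add: inj_tuple_def list_eq_iff_nth_eq)
  ultimately show ?thesis using bal_eq_generator[OF H inj_tuple_unit _ z] act_unit[OF z] by simp
qed

lemma bal_eq_if_same_left_parts: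
  assumes F: "inj_tuple m F" and F': "inj_tuple m F'" and z: "z \<in> X m"
    and same: "left_parts F = left_parts F'"
  shows "bal_eq m (F, z, ()) (F', z, ())"
proof -
  have "\<forall>i<Suc m. \<exists>H :: nat + nat \<Rightarrow> nat. inj H \<and> (\<exists>v. inj v \<and> F ! i = H \<circ> map_sum id v)
                          \<and> (\<exists>v'. inj v' \<and> F' ! i = H \<circ> map_sum id v')"
  proof (intro allI impI)
    fix i assume "i < Suc m"
    then have "inj (F ! i)" "inj (F' ! i)" "F ! i \<circ> Inl = F' ! i \<circ> Inl"
      using F F' arg_cong[OF same, of "\<lambda>l. l ! i"] by (auto simp: inj_tuple_iff_nth)
    then obtain H :: "nat + nat \<Rightarrow> nat" and v v' :: "nat \<Rightarrow> nat"
      where "inj H" "inj v" "inj v'" "F ! i = H \<circ> map_sum id v" "F' ! i = H \<circ> map_sum id v'"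
      by (rule inj_sums_common_left_factor)
    then show "\<exists>H :: nat + nat \<Rightarrow> nat. inj H \<and> (\<exists>v. inj v \<and> F ! i = H \<circ> map_sum id v)
                          \<and> (\<exists>v'. inj v' \<and> F' ! i = H \<circ> map_sum id v')"
      by blast
  qed
  then obtain H :: "(nat + nat \<Rightarrow> nat) list" where H: "length H = Suc m"
    "\<forall>i<Suc m. inj (H ! i) \<and> (\<exists>v. inj v \<and> F ! i = H ! i \<circ> map_sum id v)
                          \<and> (\<exists>v'. inj v' \<and> F' ! i = H ! i \<circ> map_sum id v')"
    by (rule ex_list_of_levelwise)
  then have "inj_tuple m H" by (simp add: inj_tuple_iff_nth)
  then have "bal_eq m (H, z, ()) (F, z, ())" "bal_eq m (H, z, ()) (F', z, ())"
    using H F F' z by (simp_all add: bal_eq_right_factor)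
  then show ?thesis by (rule bal_rel_trans[OF bal_rel_sym])
qed

lemma bal_eq_stabilizer_rep:
  assumes f: "inj_tuple m f" and x: "x \<in> X m" and G: "inj_tuple m G"
    and stab: "tuple_mult (left_parts G) (left_parts f) = left_parts f"
  shows "bal_eq m (f, x, ()) (G, act m (left_parts f) x, ())"
proof -
  let ?a = "left_parts f"
  have lengths: "length ?a = length G" "length (tuple_unit m) = length G"
    using f G by (simp_all add: inj_tuple_def)
  have "bal_eq m (G, act m ?a x, ()) (tuple_comp_sum G ?a (tuple_unit m), x, ())"
    using bal_eq_generator[OF G inj_tuple_left_parts[OF f] inj_tuple_unit x] .
  also have "bal_eq m (tuple_comp_sum G ?a (tuple_unit m), x, ()) (f, x, ())"
    using bal_eq_if_same_left_parts[OF inj_tuple_comp_sum[OF G inj_tuple_left_parts[OF f] inj_tuple_unit] f x]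
    by (simp add: left_parts_tuple_comp_sum[OF lengths] stab)
  finally show ?thesis by (rule bal_rel_sym)
qed

lemma bal_eq_if_Phi_eq:
  fixes f f' :: "(nat + nat \<Rightarrow> nat) list"
  assumes f: "inj_tuple m f" and f': "inj_tuple m f'" and x: "x \<in> X m" and x': "x' \<in> X m"
    and eq: "act m (left_parts f) x = act m (left_parts f') x'"
  shows "bal_eq m (f, x, ()) (f', x', ())"
proof -
  obtain G G' :: "(nat + nat \<Rightarrow> nat) list" where G: "inj_tuple m G" "inj_tuple m G'"
    and stab: "tuple_mult (left_parts G) (left_parts f) = left_parts f"
      "tuple_mult (left_parts G') (left_parts f') = left_parts f'"
    and comm: "tuple_mult (left_parts G) (left_parts G') = tuple_mult (left_parts G') (left_parts G)"
    by (rule commuting_stabilizers_of_left_parts[OF f f'])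
  let ?y = "act m (left_parts f) x" and ?c = "left_parts G" and ?c' = "left_parts G'"
  have c: "inj_tuple m ?c" "inj_tuple m ?c'" using G by (simp_all add: inj_tuple_left_parts)
  have y: "?y \<in> X m" using act_closed[OF inj_tuple_left_parts[OF f] x] .
  have c_y: "act m ?c ?y = ?y"
    using act_mult[OF c(1) inj_tuple_left_parts[OF f] x] stab(1) by simp
  have c'_y: "act m ?c' ?y = ?y"
    unfolding eq using act_mult[OF c(2) inj_tuple_left_parts[OF f'] x'] stab(2) by simp
  have lengths: "length G = Suc m" "length G' = Suc m" using G by (simp_all add: inj_tuple_def)
  have "bal_eq m (f, x, ()) (G, ?y, ())"
    using bal_eq_stabilizer_rep[OF f x G(1) stab(1)] .
  also have "bal_eq m (G, ?y, ()) (tuple_comp_sum G ?c' (tuple_unit m), ?y, ())"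
    using bal_eq_generator[OF G(1) c(2) inj_tuple_unit y] c'_y by simp
  also have "bal_eq m \<dots> (tuple_comp_sum G' ?c (tuple_unit m), ?y, ())"
    by (rule bal_eq_if_same_left_parts)
      (simp_all add: inj_tuple_comp_sum G c inj_tuple_unit y left_parts_tuple_comp_sum lengths comm)
  also have "bal_eq m \<dots> (G', ?y, ())"
    using bal_eq_generator[OF G(2) c(1) inj_tuple_unit y] c_y by (simp add: bal_rel_sym)
  also have "bal_eq m \<dots> (f', x', ())"
    using bal_eq_stabilizer_rep[OF f' x' G(2) stab(2)] eq by (simp add: bal_rel_sym)
  finally show ?thesis .
qed

lemma Phi_eq_iff_bal_eq:
  assumes p: "p \<in> bal_reps X term_X m" and q: "q \<in> bal_reps X term_X m"
  shows "Phi act term_act m p = Phi act term_act m q \<longleftrightarrow> bal_eq m p q"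
proof
  obtain f x where f: "p = (f, x, ())" "inj_tuple m f" "x \<in> X m"
    using p by (auto simp: bal_reps_def)
  obtain f' x' where f': "q = (f', x', ())" "inj_tuple m f'" "x' \<in> X m"
    using q by (auto simp: bal_reps_def)
  assume "Phi act term_act m p = Phi act term_act m q"
  then show "bal_eq m p q"
    using bal_eq_if_Phi_eq[OF f(2) f'(2) f(3) f'(3)] f(1) f'(1) by simp
qed (rule Phi_eq_if_bal_eq)

lemma image_Phi: "Phi act term_act m ` bal_reps X term_X m = X_mu X act m \<times> term_X m"
proof
  show "Phi act term_act m ` bal_reps X term_X m \<subseteq> X_mu X act m \<times> term_X m"
    by (auto simp: bal_reps_def term_X_def act_left_parts_in_X_mu)
  show "X_mu X act m \<times> term_X m \<subseteq> Phi act term_act m ` bal_reps X term_X m"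
  proof
    fix z assume "z \<in> X_mu X act m \<times> term_X m"
    then obtain y where y: "z = (y, ())" "y \<in> X_mu X act m" by (auto simp: term_X_def)
    obtain G :: "(nat + nat \<Rightarrow> nat) list" where G: "inj_tuple m G" "act m (left_parts G) y = y"
      by (rule X_mu_stabilized_by_left_parts[OF y(2)])
    have "(G, y, ()) \<in> bal_reps X term_X m"
      using G y by (simp add: bal_reps_def term_X_def X_mu_def)
    moreover have "z = Phi act term_act m (G, y, ())" using G y by simp
    ultimately show "z \<in> Phi act term_act m ` bal_reps X term_X m" by blast
  qed
qed

lemma Phi_equivariant:
  assumes "EM_simplex m w" "(f, x, y) \<in> bal_reps X term_X m"
  shows "Phi act term_act m (tuple_mult w f, x, y)
    = (act m w (fst (Phi act term_act m (f, x, y))), term_act m w (snd (Phi act term_act m (f, x, y))))"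
  using assms by (simp add: bal_reps_def act_mult inj_tuple_left_parts left_parts_tuple_mult term_act_def)

lemma Phi_simplicial:
  assumes "simp_op m n \<alpha>" "(f, x, y) \<in> bal_reps X term_X n"
  shows "Phi act term_act m (tuple_restr f \<alpha>, sim m n \<alpha> x, term_sim m n \<alpha> y)
    = (sim m n \<alpha> (fst (Phi act term_act n (f, x, y))), term_sim m n \<alpha> (snd (Phi act term_act n (f, x, y))))"
proof -
  have "\<forall>j\<in>set \<alpha>. j < length f"
    using assms by (auto simp: simp_op_def bal_reps_def inj_tuple_def)
  then show ?thesis
    using assms by (simp add: bal_reps_def sim_act inj_tuple_left_parts left_parts_tuple_restr term_sim_def)
qed

end

theorem proposition2p29:
  fixes X :: "nat \<Rightarrow> 'a set"
    and sim :: "nat \<Rightarrow> nat \<Rightarrow> nat list \<Rightarrow> 'a \<Rightarrow> 'a"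
    and act :: "nat \<Rightarrow> (nat \<Rightarrow> nat) list \<Rightarrow> 'a \<Rightarrow> 'a"
  assumes "EM_sset X sim act"
  shows "\<forall>m.
     \<comment> \<open>Phi is well defined on the quotient and injective on it\<close>
     (\<forall>p\<in>bal_reps X term_X m. \<forall>q\<in>bal_reps X term_X m.
        Phi act term_act m p = Phi act term_act m q
          \<longleftrightarrow> bal_rel X act term_X term_act m p q)
     \<comment> \<open>its image is exactly X^mu (x * = X^mu)\<close>
   \<and> Phi act term_act m ` bal_reps X term_X m = X_mu X act m \<times> term_X m
     \<comment> \<open>Phi is E M-equivariant (E M acting by postcomposition on f)\<close>
   \<and> (\<forall>w f x y. EM_simplex m w \<longrightarrow> (f, x, y) \<in> bal_reps X term_X m \<longrightarrow>
        Phi act term_act m (tuple_mult w f, x, y)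
          = (act m w (fst (Phi act term_act m (f, x, y))),
             term_act m w (snd (Phi act term_act m (f, x, y)))))
     \<comment> \<open>Phi is simplicial (precomposition on f)\<close>
   \<and> (\<forall>n \<alpha> f x y. simp_op m n \<alpha> \<longrightarrow> (f, x, y) \<in> bal_reps X term_X n \<longrightarrow>
        Phi act term_act m (tuple_restr f \<alpha>, sim m n \<alpha> x, term_sim m n \<alpha> y)
          = (sim m n \<alpha> (fst (Phi act term_act n (f, x, y))),
             term_sim m n \<alpha> (snd (Phi act term_act n (f, x, y)))))"
proof -
  interpret EM_simplicial_set X sim act by unfold_locales (rule assms)
  show ?thesis
    by (intro allI conjI ballI impI Phi_eq_iff_bal_eq image_Phi Phi_equivariant Phi_simplicial)
qed

end
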